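(* Let $\mathcal{X},\mathcal{S},\mathcal{A}$ be finite sets, let $Q(\cdot)\in\Delta(\mathcal{X})$ be an initial distribution and $Q(\cdot\mid x,a)\in\Delta(\mathcal{X})$ a transition kernel, and let $R^r:\mathcal{X}\times\mathcal{A}\to\mathbb{R}$ be the receiver's reward function. Consider the following process over periods $t=1,2,\dots$: $X_1\sim Q$; in period $t$ the sender, who observes $X_t$, sends a signal $S_t\in\mathcal{S}$; the receiver then takes an action $A_t\in\mathcal{A}$ and observes its reward $R^r_t=R^r(X_t,A_t)$; then $X_{t+1}\sim Q(\cdot\mid X_t,A_t)$. Suppose actions are generated by a common-agent policy of type $\theta$: at each $t$, a prescription $\gamma^s_t=\theta^s_t[\mu_t]$, which is a map $\mathcal{X}\to\Delta(\mathcal{S})$, is chosen as a function of the belief $\mu_t$ and the sender plays $S_t\sim\gamma^s_t(\cdot\mid X_t)$; and a prescription $\gamma^r_t=\theta^r_t[\nu_t]\in\Delta(\mathcal{A})$ is chosen as a function of the belief $\nu_t$ and the receiver plays $A_t\sim\gamma^r_t(\cdot)$. Here $\mu_1=Q$, and the beliefs are $$\nu_t(x)=P^{\theta}(X_t=x\mid s_{1:t},a_{1:t-1},r^r_{1:t-1}),\qquad \mu_{t+1}(x)=P^{\theta}(X_{t+1}=x\mid s_{1:t},a_{1:t},r^r_{1:t}).$$ Then there exist update functions $F$ and $G$, not depending on $\theta$, such that for every $t$ (along histories where the conditional probabilities are defined) $$\nu_t=F(\mu_t,\gamma^s_t,s_t),\qquad \mu_{t+1}=G(\nu_t,a_t,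r^r_t).$$
   Context: $\Delta(\mathcal{Y})$ denotes the set of probability distributions on a finite set $\mathcal{Y}$. $P^\theta$ denotes the probability measure on the process induced by the type-$\theta$ policy. The common information at the time the receiver acts in period $t$ is $(s_{1:t},a_{1:t-1},r^r_{1:t-1})$, and at the start of period $t+1$ it is $(s_{1:t},a_{1:t},r^r_{1:t})$; the sender additionally observes the state privately. *)

theory Defs
  imports "HOL-Probability.Probability"
begin

text \<open>
  A type-theta policy is a pair (thS, thR) with
    thS :: nat => 'x pmf => ('x => 's pmf),   thR :: nat => 'x pmf => 'a pmf
  (the period index t >= 1 and the current belief determine the prescription).
\<close>

type_synonym ('x, 's, 'a) traj = "('x \<times> 's \<times> 'a \<times> real) list"
type_synonym ('s, 'a) cinfo = "('s \<times> 'a \<times> real) list"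

definition comm :: "('x, 's, 'a) traj \<Rightarrow> ('s, 'a) cinfo" where
  "comm \<tau> = map (\<lambda>(x, s, a, r). (s, a, r)) \<tau>"

text \<open>Belief mu from the joint law of (trajectory of first t periods, X_{t+1}):
  conditional law of X_{t+1} given the common information h.\<close>
definition mu_of :: "(('x, 's, 'a) traj \<times> 'x) pmf \<Rightarrow> ('s, 'a) cinfo \<Rightarrow> 'x pmf" where
  "mu_of L h = map_pmf snd (cond_pmf L {(\<tau>, x). comm \<tau> = h})"

text \<open>Joint law of (trajectory of first t-1 periods, X_t, S_t) in period t,
  given the joint law L of (first t-1 periods, X_t).\<close>
definition M_of :: "(nat \<Rightarrow> 'x pmf \<Rightarrow> ('x \<Rightarrow> 's pmf)) \<Rightarrow> nat
    \<Rightarrow> (('x, 's, 'a) traj \<times> 'x) pmf \<Rightarrow> (('x, 's, 'a) traj \<times> 'x \<times> 's) pmf" where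
  "M_of thS t L = bind_pmf L (\<lambda>(\<tau>, x).
      map_pmf (\<lambda>s. (\<tau>, x, s)) (thS t (mu_of L (comm \<tau>)) x))"

definition nu_of :: "(('x, 's, 'a) traj \<times> 'x \<times> 's) pmf \<Rightarrow> ('s, 'a) cinfo \<Rightarrow> 's \<Rightarrow> 'x pmf" where
  "nu_of M h s = map_pmf (\<lambda>(\<tau>, x, s'). x)
      (cond_pmf M {(\<tau>, x, s'). comm \<tau> = h \<and> s' = s})"

text \<open>law Q K Rr thS thR t : joint law (P^theta) of (first t periods, X_{t+1}).\<close>
primrec law :: "'x pmf \<Rightarrow> ('x \<Rightarrow> 'a \<Rightarrow> 'x pmf) \<Rightarrow> ('x \<Rightarrow> 'a \<Rightarrow> real)
    \<Rightarrow> (nat \<Rightarrow> 'x pmf \<Rightarrow> ('x \<Rightarrow> 's pmf)) \<Rightarrow> (nat \<Rightarrow> 'x pmf \<Rightarrow> 'a pmf)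
    \<Rightarrow> nat \<Rightarrow> (('x, 's, 'a) traj \<times> 'x) pmf" where
  "law Q K Rr thS thR 0 = map_pmf (\<lambda>x. ([], x)) Q"
| "law Q K Rr thS thR (Suc t) =
     (let M = M_of thS (Suc t) (law Q K Rr thS thR t) in
      bind_pmf M (\<lambda>(\<tau>, x, s).
        bind_pmf (thR (Suc t) (nu_of M (comm \<tau>) s)) (\<lambda>a.
          map_pmf (\<lambda>x'. (\<tau> @ [(x, s, a, Rr x a)], x')) (K x a))))"

end

theory Submission
  imports Defs
begin

(* Both beliefs are Bayesian posteriors, and the policy enters them only through prescriptions
   that are constant on the conditioning event.  Given the common history h, every path uses the
   same sender prescription \<gamma> = thS t (mu_of L h), so the conditional law of (X_t, S_t) is the
   pair law of \<mu> and \<gamma>, and conditioning further on S_t = s depends on (\<mu>, \<gamma>, s) alone.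
   Given (h, s), the receiver's prescription is likewise fixed and independent of X_t, so
   conditioning on A_t = a leaves the belief \<nu> untouched; the reward r then restricts \<nu> to
   {x. Rr x a = r}, and X_{t+1} follows by the transition K(-, a). *)

lemma measure_cond_pmf:
  assumes "set_pmf p \<inter> A \<noteq> {}"
  shows "measure (cond_pmf p A) B = measure p (A \<inter> B) / measure p A"
  using assms unfolding cond_pmf.rep_eq[OF assms]
  by (subst measure_uniform_measure)
     (simp_all add: measure_pmf.emeasure_eq_measure measure_pmf_zero_iff)

lemma cond_cond_pmf:
  assumes "set_pmf p \<inter> (A \<inter> B) \<noteq> {}"
  shows "cond_pmf (cond_pmf p A) B = cond_pmf p (A \<inter> B)"
proof (rule pmf_eqI)
  fix x
  have A: "set_pmf p \<inter> A \<noteq> {}"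
    using assms by auto
  then have AB: "set_pmf (cond_pmf p A) \<inter> B \<noteq> {}"
    using assms by (auto simp: set_cond_pmf)
  have "measure p A \<noteq> 0" "measure p (A \<inter> B) \<noteq> 0"
    using assms by (auto simp: measure_pmf_zero_iff)
  then show "pmf (cond_pmf (cond_pmf p A) B) x = pmf (cond_pmf p (A \<inter> B)) x"
    by (simp add: pmf_cond[OF AB] pmf_cond[OF A] pmf_cond[OF assms] measure_cond_pmf[OF A])
qed

lemma cond_pmf_singleton:
  assumes "x \<in> set_pmf p"
  shows "cond_pmf p {x} = return_pmf x"
proof -
  have "set_pmf (cond_pmf p {x}) \<subseteq> {x}"
    using assms by auto
  then show ?thesis
    by (simp add: set_pmf_subset_singleton)
qed

lemma cond_pair_pmf_snd:
  assumes "set_pmf q \<inter> B \<noteq> {}"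
  shows "cond_pmf (pair_pmf p q) (UNIV \<times> B) = pair_pmf p (cond_pmf q B)"
proof (rule pmf_eqI)
  fix z
  have ne: "set_pmf (pair_pmf p q) \<inter> (UNIV \<times> B) \<noteq> {}"
    using assms set_pmf_not_empty[of p] by auto
  have "measure (pair_pmf p q) (UNIV \<times> B) = measure q B"
    by (metis map_snd_pair_pmf measure_map_pmf vimage_snd)
  then show "pmf (cond_pmf (pair_pmf p q) (UNIV \<times> B)) z = pmf (pair_pmf p (cond_pmf q B)) z"
    by (cases z) (simp add: pmf_cond[OF ne] pmf_cond[OF assms] pmf_pair)
qed

lemma cond_bind_pmf:
  assumes ne: "set_pmf p \<inter> A \<noteq> {}"
    and determined:
      "\<And>x y. x \<in> set_pmf p \<Longrightarrow> y \<in> set_pmf (K x) \<Longrightarrow> y \<in> B \<longleftrightarrow> x \<in> A"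
  shows "cond_pmf (bind_pmf p K) B = bind_pmf (cond_pmf p A) K"
proof (rule pmf_eqI)
  fix y
  have neB: "set_pmf (bind_pmf p K) \<inter> B \<noteq> {}"
    using ne determined set_pmf_not_empty by fastforce
  have "emeasure (bind_pmf p K) B = (\<integral>\<^sup>+x. indicator A x \<partial>p)"
    unfolding emeasure_bind_pmf
  proof (rule nn_integral_cong_AE, unfold AE_measure_pmf_iff, intro ballI)
    fix x assume x: "x \<in> set_pmf p"
    show "emeasure (K x) B = indicator A x"
    proof (cases "x \<in> A")
      case True
      then have "AE y in K x. y \<in> B"
        using determined[OF x] by (simp add: AE_measure_pmf_iff)
      then show ?thesis
        using True by (simp add: measure_pmf.emeasure_eq_1_AE)
    next
      case False
      then have "set_pmf (K x) \<inter> B = {}"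
        using determined[OF x] by blast
      then show ?thesis
        using False by (simp add: measure_pmf.emeasure_eq_measure measure_pmf_zero_iff)
    qed
  qed
  then have mass: "emeasure (bind_pmf p K) B = emeasure p A"
    by simp
  have dens: "(\<integral>\<^sup>+x. ennreal (pmf (K x) y) * indicator A x \<partial>p) =
      ennreal (pmf (bind_pmf p K) y) * indicator B y"
    unfolding ennreal_pmf_bind
    by (subst nn_integral_multc[symmetric], simp, rule nn_integral_cong_AE)
       (auto simp: AE_measure_pmf_iff split: split_indicator dest: determined simp flip: set_pmf_iff)
  have "ennreal (pmf (bind_pmf (cond_pmf p A) K) y) =
      (\<integral>\<^sup>+x. ennreal (pmf (K x) y) * indicator A x \<partial>p) / emeasure p A"
    unfolding ennreal_pmf_bind cond_pmf.rep_eq[OF ne] by (simp add: nn_integral_uniform_measure)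
  also have "\<dots> = ennreal (pmf (cond_pmf (bind_pmf p K) B) y)"
  proof -
    have "measure (bind_pmf p K) B > 0"
      using neB by (simp add: zero_less_measure_iff measure_pmf_zero_iff)
    then show ?thesis
      unfolding dens mass[symmetric] pmf_cond[OF neB]
      by (simp add: measure_pmf.emeasure_eq_measure divide_ennreal)
  qed
  finally show "pmf (cond_pmf (bind_pmf p K) B) y = pmf (bind_pmf (cond_pmf p A) K) y"
    by simp
qed

lemma cond_bind_pmf_Pair_const:
  assumes ne: "set_pmf p \<inter> A \<noteq> {}" and a: "a \<in> set_pmf q"
    and const: "\<And>x. x \<in> set_pmf p \<Longrightarrow> x \<in> A \<Longrightarrow> K x = q"
  shows "cond_pmf (bind_pmf p (\<lambda>x. map_pmf (Pair x) (K x))) (A \<times> {a}) =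
    map_pmf (\<lambda>x. (x, a)) (cond_pmf p A)"
proof -
  let ?J = "bind_pmf p (\<lambda>x. map_pmf (Pair x) (K x))"
  have neJ: "set_pmf ?J \<inter> ((A \<times> UNIV) \<inter> (UNIV \<times> {a})) \<noteq> {}"
    using ne a const by fastforce
  have "cond_pmf ?J (A \<times> UNIV) = bind_pmf (cond_pmf p A) (\<lambda>x. map_pmf (Pair x) (K x))"
    by (rule cond_bind_pmf[OF ne]) auto
  also have "\<dots> = pair_pmf (cond_pmf p A) q"
    unfolding pair_pmf_def map_pmf_def
    by (auto simp: set_cond_pmf[OF ne] const intro!: bind_pmf_cong)
  finally have "cond_pmf ?J (A \<times> {a}) = cond_pmf (pair_pmf (cond_pmf p A) q) (UNIV \<times> {a})"
    using cond_cond_pmf[OF neJ] by (simp add: Times_Int_Times)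
  also have "\<dots> = pair_pmf (cond_pmf p A) (return_pmf a)"
    using a by (simp add: cond_pair_pmf_snd cond_pmf_singleton)
  finally show ?thesis
    by (simp add: pair_return_pmf2)
qed

definition signal_update :: "'x pmf \<Rightarrow> ('x \<Rightarrow> 's pmf) \<Rightarrow> 's \<Rightarrow> 'x pmf" where
  "signal_update \<mu> \<gamma> s =
     map_pmf fst (cond_pmf (bind_pmf \<mu> (\<lambda>x. map_pmf (Pair x) (\<gamma> x))) {z. snd z = s})"

lemma nu_of_M_of:
  fixes L :: "(('x, 's, 'a) traj \<times> 'x) pmf"
  assumes ne: "set_pmf (M_of thS t L) \<inter> {(\<tau>, x, s'). comm \<tau> = h \<and> s' = s} \<noteq> {}"
  shows "nu_of (M_of thS t L) h s = signal_update (mu_of L h) (thS t (mu_of L h)) s"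
proof -
  define \<gamma> where "\<gamma> = thS t (mu_of L h)"
  define emit :: "('x, 's, 'a) traj \<times> 'x \<Rightarrow> _" where
    "emit = (\<lambda>(\<tau>, x). map_pmf (\<lambda>s. (\<tau>, x, s)) (thS t (mu_of L (comm \<tau>)) x))"
  define obs :: "('x, 's, 'a) traj \<times> 'x \<times> 's \<Rightarrow> 'x \<times> 's" where "obs = snd"
  let ?M = "M_of thS t L"
  let ?E = "{(\<tau>, x). comm \<tau> = h}"
  let ?Eh = "{(\<tau>, x, s'). comm \<tau> = h}"
  have M: "?M = bind_pmf L emit"
    by (simp add: M_of_def emit_def)
  have neE: "set_pmf L \<inter> ?E \<noteq> {}"
    using ne by (auto simp: M emit_def)
  have "cond_pmf ?M ?Eh = bind_pmf (cond_pmf L ?E) emit"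
    unfolding M by (rule cond_bind_pmf[OF neE]) (auto simp: emit_def)
  \<comment> \<open>on the event comm \<tau> = h every path uses the same prescription \<gamma>\<close>
  then have "map_pmf obs (cond_pmf ?M ?Eh) =
      bind_pmf (cond_pmf L ?E) (\<lambda>z. map_pmf (Pair (snd z)) (\<gamma> (snd z)))"
    by (auto simp: map_bind_pmf emit_def obs_def \<gamma>_def map_pmf_comp set_cond_pmf[OF neE]
        intro!: bind_pmf_cong)
  also have "\<dots> = bind_pmf (mu_of L h) (\<lambda>x. map_pmf (Pair x) (\<gamma> x))"
    by (simp add: mu_of_def bind_map_pmf)
  finally have joint:
    "map_pmf obs (cond_pmf ?M ?Eh) = bind_pmf (mu_of L h) (\<lambda>x. map_pmf (Pair x) (\<gamma> x))" .
  have "nu_of ?M h s =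
      map_pmf fst (map_pmf obs (cond_pmf (cond_pmf ?M ?Eh) (obs -` {z. snd z = s})))"
  proof -
    have ev: "{(\<tau>, x, s'). comm \<tau> = h \<and> s' = s} = ?Eh \<inter> obs -` {z. snd z = s}"
      and proj: "(\<lambda>(\<tau>, x, s'). x) = (\<lambda>z. fst (obs z))"
      by (auto simp: obs_def)
    have "nu_of ?M h s =
        map_pmf (\<lambda>z. fst (obs z)) (cond_pmf ?M (?Eh \<inter> obs -` {z. snd z = s}))"
      unfolding nu_of_def ev proj ..
    then show ?thesis
      by (simp only: map_pmf_comp cond_cond_pmf[OF ne[unfolded ev]])
  qed
  also have "\<dots> = map_pmf fst (cond_pmf (map_pmf obs (cond_pmf ?M ?Eh)) {z. snd z = s})"
  proof -
    have "set_pmf ?M \<inter> ?Eh \<noteq> {}"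
      using ne by auto
    then show ?thesis
      using ne by (subst cond_map_pmf) (auto simp: obs_def set_cond_pmf)
  qed
  finally show ?thesis
    unfolding joint signal_update_def \<gamma>_def .
qed

lemma comm_snoc [simp]: "comm (\<tau> @ [(x, s, a, r)]) = comm \<tau> @ [(s, a, r)]"
  by (simp add: comm_def)

definition receiver_stage :: "('x \<Rightarrow> 'a \<Rightarrow> 'x pmf) \<Rightarrow> ('x \<Rightarrow> 'a \<Rightarrow> real) \<Rightarrow> ('x pmf \<Rightarrow> 'a pmf)
    \<Rightarrow> (('x, 's, 'a) traj \<times> 'x \<times> 's) pmf \<Rightarrow> (('x, 's, 'a) traj \<times> 'x) pmf" where
  "receiver_stage K Rr \<rho> M = bind_pmf M (\<lambda>(\<tau>, x, s).
     bind_pmf (\<rho> (nu_of M (comm \<tau>) s)) (\<lambda>a.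
       map_pmf (\<lambda>x'. (\<tau> @ [(x, s, a, Rr x a)], x')) (K x a)))"

lemma law_Suc_eq_receiver_stage:
  "law Q K Rr thS thR (Suc t) =
     receiver_stage K Rr (thR (Suc t)) (M_of thS (Suc t) (law Q K Rr thS thR t))"
  by (simp add: receiver_stage_def Let_def)

definition reward_update :: "('x \<Rightarrow> 'a \<Rightarrow> 'x pmf) \<Rightarrow> ('x \<Rightarrow> 'a \<Rightarrow> real)
    \<Rightarrow> 'x pmf \<Rightarrow> 'a \<Rightarrow> real \<Rightarrow> 'x pmf" where
  "reward_update K Rr \<nu> a r = bind_pmf (cond_pmf \<nu> {x. Rr x a = r}) (\<lambda>x. K x a)"

lemma mu_of_receiver_stage:
  fixes M :: "(('x, 's, 'a) traj \<times> 'x \<times> 's) pmf"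
  assumes ne:
    "set_pmf (receiver_stage K Rr \<rho> M) \<inter> {(\<tau>, x). comm \<tau> = h @ [(s, a, r)]} \<noteq> {}"
  shows "mu_of (receiver_stage K Rr \<rho> M) (h @ [(s, a, r)]) = reward_update K Rr (nu_of M h s) a r"
proof -
  \<comment> \<open>W: the receiver's decision point together with the action taken there; the new common
    history is a function of it, so conditioning on that history can be pulled back to W\<close>
  define W where
    "W = bind_pmf M (\<lambda>m. map_pmf (Pair m) (\<rho> (nu_of M (comm (fst m)) (snd (snd m)))))"
  define step :: "(('x, 's, 'a) traj \<times> 'x \<times> 's) \<times> 'a \<Rightarrow> _" where
    "step = (\<lambda>((\<tau>, x, s), a). map_pmf (\<lambda>x'. (\<tau> @ [(x, s, a, Rr x a)], x')) (K x a))"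
  define state :: "(('x, 's, 'a) traj \<times> 'x \<times> 's) \<times> 'a \<Rightarrow> 'x" where
    "state = (\<lambda>w. fst (snd (fst w)))"
  let ?B = "{(\<tau>, x, s'). comm \<tau> = h \<and> s' = s}"
  let ?C = "{x. Rr x a = r}"
  let ?E = "{(\<tau>, x). comm \<tau> = h @ [(s, a, r)]}"
  let ?A = "(?B \<times> {a}) \<inter> state -` ?C"
  have stage: "receiver_stage K Rr \<rho> M = bind_pmf W step"
    by (simp add: receiver_stage_def W_def step_def bind_assoc_pmf bind_map_pmf split_def)
  obtain m where m: "m \<in> set_pmf M" "m \<in> ?B" "a \<in> set_pmf (\<rho> (nu_of M h s))"
    "Rr (fst (snd m)) a = r"
    using ne by (fastforce simp: stage W_def step_def)
  have "(m, a) \<in> set_pmf W \<inter> ?A"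
    using m by (force simp: W_def state_def)
  then have neA: "set_pmf W \<inter> ?A \<noteq> {}"
    by blast
  have "cond_pmf (bind_pmf W step) ?E = bind_pmf (cond_pmf W ?A) step"
    by (rule cond_bind_pmf[OF neA]) (auto simp: W_def step_def state_def)
  moreover have "set_pmf (cond_pmf W ?A) = set_pmf W \<inter> ?A"
    by (rule set_cond_pmf[OF neA])
  ultimately have "mu_of (receiver_stage K Rr \<rho> M) (h @ [(s, a, r)]) =
      bind_pmf (cond_pmf W ?A) (\<lambda>w. K (state w) a)"
    by (auto simp: mu_of_def stage map_bind_pmf step_def state_def map_pmf_comp
        intro!: bind_pmf_cong)
  also have "\<dots> = bind_pmf (map_pmf state (cond_pmf W ?A)) (\<lambda>y. K y a)"
    by (simp add: bind_map_pmf)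
  also have "map_pmf state (cond_pmf W ?A) = cond_pmf (nu_of M h s) ?C"
  proof -
    have neB: "set_pmf M \<inter> ?B \<noteq> {}"
      using m by blast
    have "cond_pmf W (?B \<times> {a}) = map_pmf (\<lambda>m. (m, a)) (cond_pmf M ?B)"
      unfolding W_def by (rule cond_bind_pmf_Pair_const[OF neB m(3)]) auto
    then have "map_pmf state (cond_pmf W ?A) =
        map_pmf state (cond_pmf (map_pmf (\<lambda>m. (m, a)) (cond_pmf M ?B)) (state -` ?C))"
      unfolding cond_cond_pmf[OF neA, symmetric] by simp
    also have "\<dots> = cond_pmf (map_pmf state (map_pmf (\<lambda>m. (m, a)) (cond_pmf M ?B))) ?C"
    proof (rule cond_map_pmf[where f = state, symmetric])
      have "set_pmf (cond_pmf M ?B) = set_pmf M \<inter> ?B"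
        by (rule set_cond_pmf[OF neB])
      then show "set_pmf (map_pmf (\<lambda>m. (m, a)) (cond_pmf M ?B)) \<inter> state -` ?C \<noteq> {}"
        using m by (auto simp: state_def)
    qed
    also have "map_pmf state (map_pmf (\<lambda>m. (m, a)) (cond_pmf M ?B)) = nu_of M h s"
      by (simp add: nu_of_def map_pmf_comp state_def case_prod_unfold)
    finally show ?thesis .
  qed
  finally show ?thesis
    unfolding reward_update_def .
qed

theorem lemma1:
  fixes Q :: "'x::finite pmf"
    and K :: "'x \<Rightarrow> 'a::finite \<Rightarrow> 'x pmf"
    and Rr :: "'x \<Rightarrow> 'a \<Rightarrow> real"
  shows "\<exists>(F :: 'x pmf \<Rightarrow> ('x \<Rightarrow> 's::finite pmf) \<Rightarrow> 's \<Rightarrow> 'x pmf)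
           (G :: 'x pmf \<Rightarrow> 'a \<Rightarrow> real \<Rightarrow> 'x pmf).
     \<forall>(thS :: nat \<Rightarrow> 'x pmf \<Rightarrow> ('x \<Rightarrow> 's pmf)) (thR :: nat \<Rightarrow> 'x pmf \<Rightarrow> 'a pmf).
     \<forall>t h s.
       (let L = law Q K Rr thS thR t;
            M = M_of thS (Suc t) L
        in (measure_pmf.prob M {(\<tau>, x, s'). comm \<tau> = h \<and> s' = s} > 0 \<longrightarrow>
              nu_of M h s = F (mu_of L h) (thS (Suc t) (mu_of L h)) s)
         \<and> (\<forall>a r. measure_pmf.prob (law Q K Rr thS thR (Suc t))
                     {(\<tau>, x). comm \<tau> = h @ [(s, a, r)]} > 0 \<longrightarrow>
                   mu_of (law Q K Rr thS thR (Suc t)) (h @ [(s, a, r)])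
                     = G (nu_of M h s) a r))"
proof -
  have pos_iff: "measure_pmf.prob p A > 0 \<longleftrightarrow> set_pmf p \<inter> A \<noteq> {}" for p :: "'b pmf" and A
    by (simp add: zero_less_measure_iff measure_pmf_zero_iff)
  show ?thesis
    unfolding Let_def law_Suc_eq_receiver_stage pos_iff
    by (intro exI[of _ signal_update] exI[of _ "reward_update K Rr"] allI conjI impI
        nu_of_M_of mu_of_receiver_stage)
qed

end
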